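(* Let $\alpha\in(0,1)$, let $A=\alpha/\sum_{k=2}^\infty\frac{1}{k(\log k)^2}$, and set $\alpha_1=0$, $\alpha_k=A/[k(\log k)^2]$ for $k>1$ (so $\sum_k\alpha_k=\alpha$). Let $(Z_k)_{k\in\mathbb N}$ be independent with $Z_k\sim N(\mu_k,1)$, where for $k>1$ all hypotheses are non-null with $\mu_k=(\log k)^{-1/c}$ for some fixed $c>2$, and let $p_k=1-\Phi(Z_k)$. Then the online Bonferroni test, which rejects iff there exists $k\in\mathbb N$ with $p_k\le\alpha_k$, has power one, i.e. $\mathbb P(\exists k\in\mathbb N:\ p_k\le\alpha_k)=1$.
   Context: $\Phi$ is the standard Gaussian CDF. *)

theory Defs
  imports "HOL-Probability.Probability"
begin

definition Phi :: "real \<Rightarrow> real" where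
  "Phi x = cdf std_normal_distribution x"

definition bonf_A :: "real \<Rightarrow> real" where
  "bonf_A \<alpha> = \<alpha> / (\<Sum>k. if k < 2 then 0 else 1 / (real k * (ln (real k))\<^sup>2))"

definition bonf_alpha :: "real \<Rightarrow> nat \<Rightarrow> real" where
  "bonf_alpha \<alpha> k = (if k \<le> 1 then 0 else bonf_A \<alpha> / (real k * (ln (real k))\<^sup>2))"

definition bonf_mu :: "real \<Rightarrow> real \<Rightarrow> nat \<Rightarrow> real" where
  "bonf_mu \<mu>1 c k = (if k \<le> 1 then \<mu>1 else (ln (real k)) powr (- 1 / c))"

end

theory Submission
  imports Defs "HOL-Real_Asymp.Real_Asymp"
begin

text \<open>
  With the threshold t_k = sqrt (2 ln (1 / alpha_k)), the Gaussian tail bound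
  1 - Phi t <= exp (- t^2 / 2) shows that Z_k >= t_k forces a rejection at step k.
  Bounding the normal density from below on [t_k, t_k + 1 / t_k] gives
  P(Z_k >= t_k) >= alpha_k exp (t_k mu_k - 2) / (t_k sqrt (2 pi)), and since t_k mu_k grows
  like (ln k)^(1/2 - 1/c), which beats ln ln k precisely because c > 2, this is eventually at
  least 1 / (k ln k), whose sum diverges. The events {Z_k >= t_k} are independent, so by the
  divergence half of the Borel-Cantelli lemma one of them occurs almost surely.
\<close>

lemma summable_inverse_mult_ln_powr_iff:
  assumes "0 \<le> p"
  shows "summable (\<lambda>k::nat. 1 / (real k * ln (real k) powr p)) \<longleftrightarrow> 1 < p"
proof -
  define g where "g n = 1 / (real (max n 2) * ln (real (max n 2)) powr p)" for n :: nat
  have g_nonneg: "0 \<le> g n" for n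
    unfolding g_def by simp
  have g_decreasing: "g (Suc n) \<le> g n" for n
    unfolding g_def using assms
    by (intro divide_left_mono mult_mono powr_mono2 mult_pos_pos) auto
  have g_condensed: "2 ^ n * g (2 ^ n) = real n powr (- p) / ln 2 powr p" if "1 \<le> n" for n
  proof -
    have "max (2 ^ n) 2 = (2::nat) ^ n"
      using power_increasing[OF that, of "2::nat"] by simp
    then show ?thesis
      using that by (simp add: g_def ln_realpow powr_mult powr_minus_divide)
  qed
  have "summable (\<lambda>k::nat. 1 / (real k * ln (real k) powr p)) \<longleftrightarrow> summable g"
    by (intro summable_cong eventually_mono[OF eventually_ge_at_top[of 2]]) (simp add: g_def max_def)
  also have "\<dots> \<longleftrightarrow> summable (\<lambda>n. 2 ^ n * g (2 ^ n))"
    using g_decreasing g_nonneg by (rule condensation_test)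
  also have "\<dots> \<longleftrightarrow> summable (\<lambda>n. real n powr (- p) / ln 2 powr p)"
    by (intro summable_cong eventually_mono[OF eventually_ge_at_top[of 1]] g_condensed)
  also have "\<dots> \<longleftrightarrow> - p < - 1"
    by (simp add: summable_real_powr_iff)
  finally show ?thesis
    by linarith
qed

lemma not_summable_inverse_mult_ln: "\<not> summable (\<lambda>k::nat. 1 / (real k * ln (real k)))"
proof -
  have "\<bar>ln (real k)\<bar> = ln (real k)" for k :: nat
    by (cases "k = 0") simp_all
  then show ?thesis
    using summable_inverse_mult_ln_powr_iff[of 1] by simp
qed

lemma one_minus_Phi_le_exp:
  assumes "0 \<le> s"
  shows "1 - Phi s \<le> exp (- s\<^sup>2 / 2)"
proof -
  interpret N: real_distribution std_normal_distribution
    by (rule real_dist_normal_dist)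
  have density_le: "std_normal_density x \<le> exp (- s\<^sup>2 / 2) * normal_density s 1 x" if "s \<le> x" for x
  proof -
    have "- x\<^sup>2 / 2 \<le> - s\<^sup>2 / 2 + - (x - s)\<^sup>2 / 2"
      using mult_nonneg_nonneg[OF assms, of "x - s"] that by (simp add: power2_eq_square algebra_simps)
    then show ?thesis
      by (simp add: normal_density_def mult_exp_exp divide_right_mono)
  qed
  have "1 - Phi s = N.prob (space std_normal_distribution - {..s})"
    unfolding Phi_def cdf_def2 by (rule N.prob_compl[symmetric]) simp
  also have "space std_normal_distribution - {..s} = {s<..}"
    by auto
  finally have "ennreal (1 - Phi s) = emeasure std_normal_distribution {s<..}"
    by (simp add: N.emeasure_eq_measure)
  also have "\<dots> = (\<integral>\<^sup>+x. ennreal (std_normal_density x) * indicator {s<..} x \<partial>lborel)"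
    by (rule emeasure_density) auto
  also have "\<dots> \<le> (\<integral>\<^sup>+x. ennreal (exp (- s\<^sup>2 / 2)) * ennreal (normal_density s 1 x) \<partial>lborel)"
    using density_le by (intro nn_integral_mono) (auto simp: ennreal_mult''[symmetric] indicator_def)
  also have "\<dots> = ennreal (exp (- s\<^sup>2 / 2)) * ennreal (\<integral>x. normal_density s 1 x \<partial>lborel)"
    by (simp add: nn_integral_cmult nn_integral_eq_integral)
  finally show ?thesis
    by (simp add: ennreal_le_iff[symmetric] del: ennreal_le_iff)
qed

lemma mono_Phi: "mono Phi"
proof -
  interpret real_distribution std_normal_distribution
    by (rule real_dist_normal_dist)
  show ?thesis
    unfolding mono_def Phi_def by (blast intro: cdf_nondecreasing)
qed

lemma borel_measurable_Phi: "Phi \<in> borel_measurable borel"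
  using mono_Phi by (rule borel_measurable_mono)

definition tail_threshold :: "real \<Rightarrow> real" where
  "tail_threshold a = sqrt (2 * ln (1 / a))"

lemma exp_tail_threshold:
  assumes "0 < a" "a \<le> 1"
  shows "exp (- (tail_threshold a)\<^sup>2 / 2) = a"
  using assms by (simp add: tail_threshold_def ln_div)

lemma one_minus_Phi_le_if_tail_threshold_le:
  assumes "0 < a" "a \<le> 1" "tail_threshold a \<le> x"
  shows "1 - Phi x \<le> a"
proof -
  have "1 - Phi x \<le> 1 - Phi (tail_threshold a)"
    using mono_Phi assms(3) by (simp add: monoD)
  also have "\<dots> \<le> exp (- (tail_threshold a)\<^sup>2 / 2)"
    using assms(1,2) by (intro one_minus_Phi_le_exp) (simp add: tail_threshold_def ln_div)
  also have "\<dots> = a"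
    using assms(1,2) by (rule exp_tail_threshold)
  finally show ?thesis .
qed

lemma normal_density_ge_near_tail_point:
  assumes "1 \<le> s" "0 \<le> \<mu>" "\<mu> \<le> 1" "s \<le> x" "x \<le> s + 1 / s"
  shows "exp (- s\<^sup>2 / 2 + s * \<mu> - 2) / sqrt (2 * pi) \<le> normal_density \<mu> 1 x"
proof -
  have "(x - \<mu>)\<^sup>2 \<le> (s - \<mu> + 1 / s)\<^sup>2"
    using assms by (intro power_mono) auto
  also have "\<dots> = (s - \<mu>)\<^sup>2 + 2 * (1 - \<mu> / s) + 1 / s\<^sup>2"
    using assms by (simp add: power2_eq_square field_simps)
  also have "\<dots> \<le> (s - \<mu>)\<^sup>2 + 2 + 1"
    using assms by (intro add_mono) (auto simp: power_le_one)
  also have "\<dots> \<le> s\<^sup>2 - 2 * s * \<mu> + 4"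
    using assms mult_mono[OF assms(3) assms(3)] by (simp add: power2_eq_square algebra_simps)
  finally show ?thesis
    by (simp add: normal_density_def divide_right_mono)
qed

lemma (in prob_space) prob_normal_tail_ge:
  assumes X: "distributed M lborel X (normal_density \<mu> 1)" and "1 \<le> s" "0 \<le> \<mu>" "\<mu> \<le> 1"
  shows "exp (- s\<^sup>2 / 2 + s * \<mu> - 2) / (s * sqrt (2 * pi)) \<le> prob {\<omega> \<in> space M. s \<le> X \<omega>}"
proof -
  define c where "c = exp (- s\<^sup>2 / 2 + s * \<mu> - 2) / sqrt (2 * pi)"
  have "ennreal (c / s) = ennreal c * emeasure lborel {s..s + 1 / s}"
    using assms by (simp add: c_def ennreal_mult''[symmetric])
  also have "\<dots> = (\<integral>\<^sup>+x. ennreal c * indicator {s..s + 1 / s} x \<partial>lborel)"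
    by (rule nn_integral_cmult_indicator[symmetric]) simp
  also have "\<dots> \<le> (\<integral>\<^sup>+x. ennreal (normal_density \<mu> 1 x) * indicator {s..} x \<partial>lborel)"
    unfolding c_def using normal_density_ge_near_tail_point[OF assms(2-4)]
    by (intro nn_integral_mono) (simp add: indicator_def)
  also have "\<dots> = emeasure M (X -` {s..} \<inter> space M)"
    by (rule distributed_emeasure[OF X, symmetric]) simp
  also have "X -` {s..} \<inter> space M = {\<omega> \<in> space M. s \<le> X \<omega>}"
    by auto
  finally show ?thesis
    using assms by (simp add: c_def emeasure_eq_measure mult.commute)
qed

lemma (in prob_space) indep_events_compl:
  assumes "indep_events A I"
  shows "indep_events (\<lambda>i. space M - A i) I"
proof -
  have "indep_sets (\<lambda>i. sigma_sets (space M) {A i}) I"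
    using assms unfolding indep_events_def_alt by (rule indep_sets_sigma) (simp add: Int_stable_def)
  then show ?thesis
    unfolding indep_events_def_alt
    by (rule indep_sets_mono_sets) (auto intro: sigma_sets.Compl)
qed

lemma (in prob_space) prob_INT_compl_le_exp:
  assumes indep: "indep_events A I" and J: "finite J" "J \<noteq> {}" "J \<subseteq> I"
  shows "prob (\<Inter>j\<in>J. space M - A j) \<le> exp (- (\<Sum>j\<in>J. prob (A j)))"
proof -
  have events: "A j \<in> events" if "j \<in> J" for j
    using indep J that by (auto simp: indep_events_def)
  have "prob (\<Inter>j\<in>J. space M - A j) = (\<Prod>j\<in>J. prob (space M - A j))"
    using indep_events_compl[OF indep] J by (auto simp: indep_events_def)
  also have "\<dots> = (\<Prod>j\<in>J. 1 - prob (A j))"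
    using events by (intro prod.cong) (auto simp: prob_compl)
  also have "\<dots> \<le> (\<Prod>j\<in>J. exp (- prob (A j)))"
  proof (intro prod_mono conjI)
    show "1 - prob (A j) \<le> exp (- prob (A j))" for j
      using exp_ge_add_one_self[of "- prob (A j)"] by simp
  qed simp
  also have "\<dots> = exp (- (\<Sum>j\<in>J. prob (A j)))"
    using J(1) by (simp add: exp_sum sum_negf[symmetric])
  finally show ?thesis .
qed

lemma (in prob_space) prob_UN_indep_events_eq_1:
  assumes indep: "indep_events A {N..}" and diverges: "\<not> summable (\<lambda>n. prob (A n))"
  shows "prob (\<Union>n\<in>{N..}. A n) = 1"
proof -
  define C where "C = (\<Inter>n\<in>{N..}. space M - A n)"
  have events: "A n \<in> events" if "N \<le> n" for n
    using indep that by (auto simp: indep_events_def)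
  have C_le: "prob C \<le> exp (- (\<Sum>k=N..n. prob (A k)))" if "N \<le> n" for n
  proof -
    have "prob C \<le> prob (\<Inter>k\<in>{N..n}. space M - A k)"
      using events that unfolding C_def by (intro finite_measure_mono) auto
    also have "\<dots> \<le> exp (- (\<Sum>k=N..n. prob (A k)))"
      using that by (intro prob_INT_compl_le_exp[OF indep]) auto
    finally show ?thesis .
  qed
  have "prob C = 0"
  proof (rule ccontr)
    assume "prob C \<noteq> 0"
    then have C_pos: "0 < prob C"
      using measure_nonneg[of M C] by linarith
    have tail_bounded: "(\<Sum>k=N..n + N. prob (A k)) \<le> - ln (prob C)" for n
      using ln_le_cancel_iff[OF C_pos exp_gt_zero, THEN iffD2, OF C_le[of "n + N"]] by simp
    have "summable (\<lambda>n. prob (A (n + N)))"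
    proof (rule bounded_imp_summable)
      show "(\<Sum>k\<le>n. prob (A (k + N))) \<le> - ln (prob C)" for n
        using tail_bounded[of n] sum.shift_bounds_cl_nat_ivl[of "\<lambda>k. prob (A k)" 0 N n]
        by (simp add: atLeast0AtMost)
    qed simp
    with diverges summable_iff_shift[of "\<lambda>n. prob (A n)" N] show False
      by simp
  qed
  moreover have "(\<Union>n\<in>{N..}. A n) = space M - C"
    using events sets.sets_into_space unfolding C_def by blast
  moreover have "C \<in> events"
    using events unfolding C_def by (intro sets.countable_INT') auto
  ultimately show ?thesis
    by (simp add: prob_compl)
qed

lemma summable_bonf_weights:
  "summable (\<lambda>k::nat. if k < 2 then 0 else 1 / (real k * (ln (real k))\<^sup>2))"
proof -
  have "(\<lambda>k::nat. if k < 2 then 0 else 1 / (real k * (ln (real k))\<^sup>2)) =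
        (\<lambda>k. 1 / (real k * ln (real k) powr 2))"
    by (auto simp: fun_eq_iff less_2_cases_iff)
  then show ?thesis
    using summable_inverse_mult_ln_powr_iff[of 2] by simp
qed

lemma bonf_A_pos:
  assumes "0 < \<alpha>"
  shows "0 < bonf_A \<alpha>"
proof -
  have "0 < (\<Sum>k. if k < 2 then 0 else 1 / (real k * (ln (real k))\<^sup>2))"
    by (rule suminf_pos2[OF summable_bonf_weights, of 2]) auto
  with assms show ?thesis
    by (simp add: bonf_A_def)
qed

lemma bonf_alpha_pos:
  assumes "0 < \<alpha>" "2 \<le> k"
  shows "0 < bonf_alpha \<alpha> k"
  using assms bonf_A_pos[OF assms(1)] by (simp add: bonf_alpha_def)

lemma bonf_alpha_le:
  assumes "0 \<le> \<alpha>"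
  shows "bonf_alpha \<alpha> k \<le> \<alpha>"
proof (cases "k \<le> 1")
  case False
  define w where "w = (\<lambda>k::nat. if k < 2 then 0 else 1 / (real k * (ln (real k))\<^sup>2))"
  have "w k \<le> suminf w"
    using sum_le_suminf[OF summable_bonf_weights[folded w_def], of "{k}"] by (simp add: w_def)
  moreover have "0 < w k"
    using False by (simp add: w_def)
  ultimately have "w k / suminf w \<le> 1"
    by simp
  moreover have "bonf_alpha \<alpha> k = \<alpha> * (w k / suminf w)"
    using False by (simp add: bonf_alpha_def bonf_A_def w_def)
  ultimately show ?thesis
    using assms mult_left_mono[of "w k / suminf w" 1 \<alpha>] by simp
qed (simp add: bonf_alpha_def assms)

lemma ln_inverse_bonf_alpha:
  assumes "0 < \<alpha>" "2 \<le> k"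
  shows "ln (1 / bonf_alpha \<alpha> k) = ln (real k) + 2 * ln (ln (real k)) - ln (bonf_A \<alpha>)"
  using assms bonf_A_pos[OF assms(1)] by (simp add: bonf_alpha_def ln_div ln_mult ln_realpow)

lemma (in prob_space) eventually_prob_ge_tail_threshold_bonf:
  assumes "0 < \<alpha>" "\<alpha> \<le> 1" "2 < c"
    and Z: "\<And>k. 1 \<le> k \<Longrightarrow> distributed M lborel (Z k) (normal_density (bonf_mu \<mu>1 c k) 1)"
  shows "\<forall>\<^sub>F k in sequentially.
    1 / (real k * ln (real k)) \<le> prob {\<omega> \<in> space M. tail_threshold (bonf_alpha \<alpha> k) \<le> Z k \<omega>}"
proof -
  define A where "A = bonf_A \<alpha>"
  \<comment> \<open>\<open>t (ln k)\<close> is the tail threshold of \<open>bonf_alpha \<alpha> k\<close>,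
    written in a form \<open>real_asymp\<close> can handle\<close>
  define t where "t x = sqrt (2 * (x + 2 * ln x - ln A))" for x
  have A_pos: "0 < A"
    unfolding A_def using assms(1) by (rule bonf_A_pos)
  have "1 / 2 - 1 / c > 0"
    using assms(3) by (simp add: field_simps)
  then have "\<forall>\<^sub>F x in at_top. 1 \<le> x \<and> 1 \<le> t x \<and>
      x * t x * sqrt (2 * pi) \<le> A * exp (t x * x powr (- 1 / c) - 2)"
    unfolding t_def using A_pos assms(3) by (intro eventually_conj; real_asymp)
  moreover have "filterlim (\<lambda>k. ln (real k)) at_top sequentially"
    by real_asymp
  ultimately have "\<forall>\<^sub>F k in sequentially. 1 \<le> ln (real k) \<and> 1 \<le> t (ln (real k)) \<and>
      ln (real k) * t (ln (real k)) * sqrt (2 * pi)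
        \<le> A * exp (t (ln (real k)) * ln (real k) powr (- 1 / c) - 2)"
    by (rule eventually_compose_filterlim)
  moreover have "\<forall>\<^sub>F k in sequentially. 2 \<le> k"
    by (rule eventually_ge_at_top)
  ultimately show ?thesis
  proof eventually_elim
    case (elim k)
    define L where "L = ln (real k)"
    define \<mu> where "\<mu> = L powr (- 1 / c)"
    have L_pos: "0 < L"
      using elim by (simp add: L_def)
    have alpha_pos: "0 < bonf_alpha \<alpha> k" and alpha_le_1: "bonf_alpha \<alpha> k \<le> 1"
      using assms bonf_alpha_pos[of \<alpha> k] bonf_alpha_le[of \<alpha> k] elim by auto
    have threshold: "tail_threshold (bonf_alpha \<alpha> k) = t L"
      using assms(1) elim by (simp add: tail_threshold_def t_def L_def A_def ln_inverse_bonf_alpha)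
    have mu: "bonf_mu \<mu>1 c k = \<mu>" "0 \<le> \<mu>" "\<mu> \<le> 1"
      using elim powr_mono[of "- 1 / c" 0 L] assms(3)
      by (auto simp: bonf_mu_def \<mu>_def L_def)
    have alpha_eq: "bonf_alpha \<alpha> k = A / (real k * L\<^sup>2)"
      using elim by (simp add: bonf_alpha_def A_def L_def)
    have exp_t: "exp (- (t L)\<^sup>2 / 2) = A / (real k * L\<^sup>2)"
      using exp_tail_threshold[OF alpha_pos alpha_le_1, unfolded threshold] by (simp add: alpha_eq)
    have "1 / (real k * L) \<le> A / (real k * L\<^sup>2) * exp (t L * \<mu> - 2) / (t L * sqrt (2 * pi))"
      using elim L_pos by (simp add: L_def \<mu>_def field_simps power2_eq_square)
    also have "\<dots> = exp (- (t L)\<^sup>2 / 2 + t L * \<mu> - 2) / (t L * sqrt (2 * pi))"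
      by (simp add: exp_t[symmetric] mult_exp_exp add_diff_eq)
    also have "\<dots> \<le> prob {\<omega> \<in> space M. t L \<le> Z k \<omega>}"
      using elim mu by (intro prob_normal_tail_ge) (auto simp: Z L_def)
    finally show ?case
      by (simp add: L_def threshold)
  qed
qed

lemma bonf_rejects_above_tail_threshold:
  assumes "0 < \<alpha>" "\<alpha> \<le> 1" "2 \<le> k" "tail_threshold (bonf_alpha \<alpha> k) \<le> x"
  shows "1 - Phi x \<le> bonf_alpha \<alpha> k"
  using assms bonf_alpha_pos[OF assms(1,3)] bonf_alpha_le[of \<alpha> k]
  by (intro one_minus_Phi_le_if_tail_threshold_le) auto

lemma (in prob_space) not_summable_prob_ge_tail_threshold_bonf:
  assumes "0 < \<alpha>" "\<alpha> \<le> 1" "2 < c"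
    and "\<And>k. 1 \<le> k \<Longrightarrow> distributed M lborel (Z k) (normal_density (bonf_mu \<mu>1 c k) 1)"
  shows "\<not> summable (\<lambda>k. prob {\<omega> \<in> space M. tail_threshold (bonf_alpha \<alpha> k) \<le> Z k \<omega>})"
proof
  assume summable_prob: "summable (\<lambda>k. prob {\<omega> \<in> space M. tail_threshold (bonf_alpha \<alpha> k) \<le> Z k \<omega>})"
  have "norm (1 / (real k * ln (real k))) = 1 / (real k * ln (real k))" for k :: nat
    by (cases "k = 0") (simp_all add: abs_of_nonneg)
  then have "\<forall>\<^sub>F k in sequentially. norm (1 / (real k * ln (real k)))
      \<le> prob {\<omega> \<in> space M. tail_threshold (bonf_alpha \<alpha> k) \<le> Z k \<omega>}"
    using eventually_prob_ge_tail_threshold_bonf[OF assms] by simp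
  then have "summable (\<lambda>k. 1 / (real k * ln (real k)))"
    using summable_prob by (rule summable_comparison_test_ev)
  with not_summable_inverse_mult_ln show False ..
qed

lemma (in prob_space) sets_Collect_ex_one_minus_Phi_le:
  fixes Z :: "nat \<Rightarrow> 'a \<Rightarrow> real"
  assumes "\<And>k. 1 \<le> k \<Longrightarrow> Z k \<in> borel_measurable M"
  shows "{\<omega> \<in> space M. \<exists>k\<ge>1. 1 - Phi (Z k \<omega>) \<le> a k} \<in> events"
proof (rule sets.sets_Collect_countable_Ex)
  fix k :: nat
  show "{\<omega> \<in> space M. 1 \<le> k \<and> 1 - Phi (Z k \<omega>) \<le> a k} \<in> events"
  proof (cases "1 \<le> k")
    case True
    then have "(\<lambda>\<omega>. 1 - Phi (Z k \<omega>)) \<in> borel_measurable M"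
      using assms by (intro borel_measurable_diff borel_measurable_const
          measurable_compose[OF _ borel_measurable_Phi])
    with True show ?thesis
      by (simp add: borel_measurable_iff_le)
  qed simp
qed

theorem lemma4:
  fixes M :: "'a measure" and Z :: "nat \<Rightarrow> 'a \<Rightarrow> real"
    and \<alpha> c \<mu>1 :: real
  assumes "prob_space M"
    and "0 < \<alpha>" and "\<alpha> < 1"
    and "c > 2"
    and "prob_space.indep_vars M (\<lambda>_. borel) Z {1..}"
    and "\<And>k. k \<ge> 1 \<Longrightarrow> distributed M lborel (Z k) (normal_density (bonf_mu \<mu>1 c k) 1)"
  shows "measure M {\<omega> \<in> space M. \<exists>k\<ge>1. 1 - Phi (Z k \<omega>) \<le> bonf_alpha \<alpha> k} = 1"
proof -
  interpret prob_space M
    by (rule assms(1))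
  define E where "E = {\<omega> \<in> space M. \<exists>k\<ge>1. 1 - Phi (Z k \<omega>) \<le> bonf_alpha \<alpha> k}"
  define G where "G k = {\<omega> \<in> space M. tail_threshold (bonf_alpha \<alpha> k) \<le> Z k \<omega>}" for k
  have "indep_vars (\<lambda>_. borel) Z {2..}"
    using assms(5) by (rule indep_vars_subset) auto
  then have "indep_events G {2..}"
    unfolding G_def by (rule indep_eventsI_indep_vars) simp
  moreover have "\<not> summable (\<lambda>k. prob (G k))"
    unfolding G_def using assms(2) less_imp_le[OF assms(3)] assms(4,6)
    by (rule not_summable_prob_ge_tail_threshold_bonf)
  ultimately have "prob (\<Union>k\<in>{2..}. G k) = 1"
    by (rule prob_UN_indep_events_eq_1)
  moreover have "(\<Union>k\<in>{2..}. G k) \<subseteq> E"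
  proof (rule UN_least)
    fix k :: nat assume "k \<in> {2..}"
    then show "G k \<subseteq> E"
      using assms(2,3) unfolding E_def G_def
      by (auto intro!: exI[of _ k] bonf_rejects_above_tail_threshold)
  qed
  moreover have "E \<in> events"
  proof -
    have "Z k \<in> borel_measurable M" if "1 \<le> k" for k
      using distributed_measurable[OF assms(6)[OF that]] by simp
    then show ?thesis
      unfolding E_def by (rule sets_Collect_ex_one_minus_Phi_le)
  qed
  ultimately show ?thesis
    using finite_measure_mono[of "\<Union>k\<in>{2..}. G k" E] prob_le_1[of E] unfolding E_def by linarith
qed

end
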